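(* Let $R$ be a commutative ring. Let $A, A', N, N'$ be $R$-modules and let $\alpha : A \to N$, $\beta : N \to A$, $\alpha' : A' \to N'$ and $f : A \to A'$ be $R$-module morphisms. Let $V \subset N$ and $V' \subset N'$ be submodules such that $(\alpha' \circ f \circ \beta)(V) \subset V'$ and $(\alpha \circ \beta)(V) \subset V$. Suppose that the restriction $\alpha \circ \beta : V \to V$ is invertible. Then there exists a unique $R$-linear map $\tilde{f} : V \to V'$ such that $\tilde{f}(\alpha(x)) = \alpha'(f(x))$ for all $x \in \beta(V)$.
   Context: In the paper this is applied with $A = Z(M)$, $A' = Z(M')$, $f = Z(W)$ for a bordism $W : M \to M'$ and a TQFT $Z$ valued in $R$-modules, $\alpha = \alpha_M$, $\beta = \beta_M$, $\alpha' = \alpha_{M'}$, $V = V_M$, $V' = V_{M'}$; the statement above is the purely module-theoretic content. *)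

theory Defs
  imports Main "HOL.Modules"
begin

text \<open>Maps are represented
  by total HOL functions; only their values on V matter.\<close>
definition linear_map_between ::
  "('r::comm_ring_1 \<Rightarrow> 'm::ab_group_add \<Rightarrow> 'm) \<Rightarrow> ('r \<Rightarrow> 'n::ab_group_add \<Rightarrow> 'n)
   \<Rightarrow> 'm set \<Rightarrow> 'n set \<Rightarrow> ('m \<Rightarrow> 'n) \<Rightarrow> bool" where
  "linear_map_between s1 s2 V V' g \<longleftrightarrow>
     (\<forall>x\<in>V. g x \<in> V') \<and>
     (\<forall>x\<in>V. \<forall>y\<in>V. g (x + y) = g x + g y) \<and>
     (\<forall>c. \<forall>x\<in>V. g (s1 c x) = s2 c (g x))"

end

theory Submission
  imports Defs
begin

text \<open>On \<open>V\<close> the required map is forced to be \<open>\<alpha>' \<circ> f \<circ> \<beta> \<circ> (\<alpha> \<circ> \<beta>)\<^sup>-\<^sup>1\<close>: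
  since \<open>\<alpha> \<circ> \<beta>\<close> maps \<open>V\<close> onto itself, every \<open>v \<in> V\<close> is \<open>\<alpha> x\<close> for some \<open>x \<in> \<beta> ` V\<close>,
  which gives uniqueness, and the inverse of a linear bijection is linear, which gives
  existence.\<close>

lemma linear_map_between_inv_into:
  assumes "module_hom s1 s2 p" and sub: "module.subspace s1 V"
    and bij: "bij_betw p V W"
  shows "linear_map_between s2 s1 W V (inv_into V p)"
proof -
  interpret module_hom s1 s2 p by fact
  have inv_p: "inv_into V p (p x) = x" if "x \<in> V" for x
    using bij that by (simp add: bij_betw_inv_into_left)
  have preimage: "\<exists>a\<in>V. x = p a" if "x \<in> W" for x
    using bij that by (auto simp: bij_betw_def)
  show ?thesis
    unfolding linear_map_between_def
  proof (intro conjI ballI allI)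
    fix x assume "x \<in> W"
    then show "inv_into V p x \<in> V"
      using bij by (metis bij_betw_imp_surj_on inv_into_into)
  next
    fix x y assume "x \<in> W" "y \<in> W"
    then obtain a b where "a \<in> V" "b \<in> V" "x = p a" "y = p b"
      using preimage by blast
    then show "inv_into V p (x + y) = inv_into V p x + inv_into V p y"
      using sub by (simp add: inv_p m1.subspace_add flip: add)
  next
    fix c x assume "x \<in> W"
    then obtain a where "a \<in> V" "x = p a"
      using preimage by blast
    then show "inv_into V p (s2 c x) = s1 c (inv_into V p x)"
      using sub by (simp add: inv_p m1.subspace_scale flip: scale)
  qed
qed

lemma linear_map_between_comp_module_hom:
  assumes "linear_map_between s1 s2 V W g" and "module_hom s2 s3 h" and "h ` W \<subseteq> U"
  shows "linear_map_between s1 s3 V U (h \<circ> g)"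
proof -
  interpret module_hom s2 s3 h by fact
  show ?thesis
    using assms(1,3) by (auto simp: linear_map_between_def add scale)
qed

theorem mainTheorem1:
  fixes sA :: "'r::comm_ring_1 \<Rightarrow> 'a::ab_group_add \<Rightarrow> 'a"
    and sA' :: "'r \<Rightarrow> 'a2::ab_group_add \<Rightarrow> 'a2"
    and sN :: "'r \<Rightarrow> 'n::ab_group_add \<Rightarrow> 'n"
    and sN' :: "'r \<Rightarrow> 'n2::ab_group_add \<Rightarrow> 'n2"
    and \<alpha> :: "'a \<Rightarrow> 'n" and \<beta> :: "'n \<Rightarrow> 'a"
    and \<alpha>' :: "'a2 \<Rightarrow> 'n2" and f :: "'a \<Rightarrow> 'a2"
    and V :: "'n set" and V' :: "'n2 set"
  assumes "module sA" and "module sA'" and "module sN" and "module sN'"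
    and "module_hom sA sN \<alpha>" and "module_hom sN sA \<beta>"
    and "module_hom sA' sN' \<alpha>'" and "module_hom sA sA' f"
    and "module.subspace sN V" and "module.subspace sN' V'"
    and "(\<alpha>' \<circ> f \<circ> \<beta>) ` V \<subseteq> V'"
    and "(\<alpha> \<circ> \<beta>) ` V \<subseteq> V"
    and "bij_betw (\<alpha> \<circ> \<beta>) V V"
  shows "\<exists>g. linear_map_between sN sN' V V' g
             \<and> (\<forall>x\<in>\<beta> ` V. g (\<alpha> x) = \<alpha>' (f x))
             \<and> (\<forall>h. linear_map_between sN sN' V V' h
                    \<and> (\<forall>x\<in>\<beta> ` V. h (\<alpha> x) = \<alpha>' (f x))
                    \<longrightarrow> (\<forall>v\<in>V. h v = g v))"
proof -
  define q where "q = inv_into V (\<alpha> \<circ> \<beta>)"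
  define g where "g = (\<alpha>' \<circ> f \<circ> \<beta>) \<circ> q"
  have "module_hom sN sN (\<alpha> \<circ> \<beta>)" and "module_hom sN sN' (\<alpha>' \<circ> f \<circ> \<beta>)"
    using assms(5-8) by (auto intro: module_hom_compose)
  then have lin: "linear_map_between sN sN' V V' g"
    unfolding g_def q_def using assms(9,11,13)
    by (blast intro: linear_map_between_comp_module_hom linear_map_between_inv_into)
  have factors: "\<forall>x\<in>\<beta> ` V. g (\<alpha> x) = \<alpha>' (f x)"
    using bij_betw_inv_into_left[OF assms(13)] by (auto simp: g_def q_def)
  have onto: "V = \<alpha> ` \<beta> ` V"
    using assms(13) by (simp add: bij_betw_def image_comp)
  have "\<forall>v\<in>V. h v = g v" if "\<forall>x\<in>\<beta> ` V. h (\<alpha> x) = \<alpha>' (f x)" for h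
    using that factors by (subst onto) auto
  then show ?thesis
    using lin factors by blast
qed

end
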